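(* Assume the bound condition (B) holds with constants $A,D>0$ and that $\max\{\Delta x,\Delta y\}\le 2D/A$. Suppose $f\equiv 0$. Then, for any time step $\Delta t=T/N_t$ (no restriction on $\Delta t$), any grid function $v$ satisfying the scheme (IFDS) satisfies $$\|v^{k}\|_\infty\le \|v^{0}\|_\infty\qquad\text{for all }k=1,\dots,N_t .$$
   Context: Fix $0<\alpha<1$, $T>0$ and a rectangle $\Omega=(x_L,x_R)\times(y_L,y_R)$. Let $a,b,c,d,f$ be real functions on $\overline\Omega\times[0,T]$ and $\psi$ a real function on $\overline\Omega$. Grid: for positive integers $N_x,N_y,N_t$ put $\Delta x=(x_R-x_L)/N_x$, $\Delta y=(y_R-y_L)/N_y$, $\Delta t=T/N_t$, $x_i=x_L+i\Delta x$, $y_j=y_L+j\Delta y$, $t_k=k\Delta t$, and for a function $g$ write $g_{i,j}^k=g(x_i,y_j,t_k)$. Let $\sigma_{\alpha,\Delta t}=\frac{1}{(\Delta t)^\alpha\Gamma(2-\alpha)}$ and $\omega_s=(s+1)^{1-\alpha}-s^{1-\alpha}$ for $s\ge0$. Scheme (IFDS): a grid function $(v_{i,j}^k)_{0\le i\le N_x,\,0\le j\le N_y,\,0\le k\le N_t}$ with $v_{i,j}^0=\psi(x_i,y_j)$, $v_{i,j}^k=0$ whenever $i\in\{0,N_x\}$ or $j\in\{0,N_y\}$ (for $k\ge1$), and for all $1\le i\le N_x-1$, $1\le j\le N_y-1$, $0\le k\le N_t-1$: $$\sigma_{\alpha,\Delta t}\sum_{s=0}^{k}\omega_s\big(v_{i,j}^{k-s+1}-v_{i,j}^{k-s}\big)+a_{i,j}^{k+1}\frac{v_{i+1,j}^{k+1}-v_{i-1,j}^{k+1}}{2\Delta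 x}+b_{i,j}^{k+1}\frac{v_{i,j+1}^{k+1}-v_{i,j-1}^{k+1}}{2\Delta y}$$ $$=c_{i,j}^{k+1}\frac{v_{i+1,j}^{k+1}-2v_{i,j}^{k+1}+v_{i-1,j}^{k+1}}{(\Delta x)^2}+d_{i,j}^{k+1}\frac{v_{i,j+1}^{k+1}-2v_{i,j}^{k+1}+v_{i,j-1}^{k+1}}{(\Delta y)^2}+f_{i,j}^{k+1}.$$ Norm: $\|v^k\|_\infty=\max_{1\le i\le N_x-1,\,1\le j\le N_y-1}|v_{i,j}^k|$. Bound condition (B): there are constants $A>0$, $D>0$ such that for all $(x,y,t)\in\overline\Omega\times[0,T]$: $0\le a(x,y,t)\le A$, $0\le b(x,y,t)\le A$, $c(x,y,t)\ge D$, $d(x,y,t)\ge D$. *)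

theory Defs
  imports "HOL-Analysis.Analysis"
begin

definition sigma_coef :: "real \<Rightarrow> real \<Rightarrow> real" where
  "sigma_coef \<alpha> dt = 1 / (dt powr \<alpha> * Gamma (2 - \<alpha>))"

definition omega_w :: "real \<Rightarrow> nat \<Rightarrow> real" where
  "omega_w \<alpha> s = (real s + 1) powr (1 - \<alpha>) - real s powr (1 - \<alpha>)"

definition IFDS ::
  "real \<Rightarrow> real \<Rightarrow> real \<Rightarrow> real \<Rightarrow> real \<Rightarrow> real \<Rightarrow> nat \<Rightarrow> nat \<Rightarrow> nat \<Rightarrow>
   (real \<Rightarrow> real \<Rightarrow> real \<Rightarrow> real) \<Rightarrow> (real \<Rightarrow> real \<Rightarrow> real \<Rightarrow> real) \<Rightarrow>
   (real \<Rightarrow> real \<Rightarrow> real \<Rightarrow> real) \<Rightarrow> (real \<Rightarrow> real \<Rightarrow> real \<Rightarrow> real) \<Rightarrow>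
   (real \<Rightarrow> real \<Rightarrow> real \<Rightarrow> real) \<Rightarrow> (real \<Rightarrow> real \<Rightarrow> real) \<Rightarrow>
   (nat \<Rightarrow> nat \<Rightarrow> nat \<Rightarrow> real) \<Rightarrow> bool" where
  "IFDS \<alpha> T xL xR yL yR Nx Ny Nt a b c d f \<psi> v \<longleftrightarrow>
    (let dx = (xR - xL) / real Nx; dy = (yR - yL) / real Ny; dt = T / real Nt;
         X = (\<lambda>i. xL + real i * dx); Y = (\<lambda>j. yL + real j * dy); Tk = (\<lambda>k. real k * dt)
     in (\<forall>i\<le>Nx. \<forall>j\<le>Ny. v i j 0 = \<psi> (X i) (Y j))
      \<and> (\<forall>i\<le>Nx. \<forall>j\<le>Ny. \<forall>k. 1 \<le> k \<and> k \<le> Nt \<and> (i = 0 \<or> i = Nx \<or> j = 0 \<or> j = Ny) \<longrightarrow> v i j k = 0)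
      \<and> (\<forall>i j k. 1 \<le> i \<and> i \<le> Nx - 1 \<and> 1 \<le> j \<and> j \<le> Ny - 1 \<and> k \<le> Nt - 1 \<longrightarrow>
           sigma_coef \<alpha> dt * (\<Sum>s=0..k. omega_w \<alpha> s * (v i j (k - s + 1) - v i j (k - s)))
           + a (X i) (Y j) (Tk (k+1)) * (v (i+1) j (k+1) - v (i-1) j (k+1)) / (2 * dx)
           + b (X i) (Y j) (Tk (k+1)) * (v i (j+1) (k+1) - v i (j-1) (k+1)) / (2 * dy)
         = c (X i) (Y j) (Tk (k+1)) * (v (i+1) j (k+1) - 2 * v i j (k+1) + v (i-1) j (k+1)) / dx\<^sup>2
           + d (X i) (Y j) (Tk (k+1)) * (v i (j+1) (k+1) - 2 * v i j (k+1) + v i (j-1) (k+1)) / dy\<^sup>2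
           + f (X i) (Y j) (Tk (k+1))))"

text \<open>Discrete max norm over interior nodes (0 if the interior is empty).\<close>
definition grid_norm :: "nat \<Rightarrow> nat \<Rightarrow> (nat \<Rightarrow> nat \<Rightarrow> nat \<Rightarrow> real) \<Rightarrow> nat \<Rightarrow> real" where
  "grid_norm Nx Ny v k =
     Max (insert 0 ((\<lambda>(i,j). \<bar>v i j k\<bar>) ` ({1..Nx - 1} \<times> {1..Ny - 1})))"

end

theory Submission
  imports Defs
begin

text \<open>
  The L1 discretisation of the Caputo derivative writes the new value as
  sigma (v^{k+1} - H) + (spatial part) = 0, where the history term H is a combination
  of v^0, ..., v^k whose coefficients, after summation by parts, are differences of
  the weights omega_s.  Since omega_s decreases from omega_0 = 1 and stays nonnegative,
  H is a convex combination, so |H| is bounded by the past norms.  The mesh condition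
  makes every convection coefficient dominated by the matching diffusion coefficient,
  so at an interior node where |v^{k+1}| attains its maximum the stencil is a
  nonnegative combination and the discrete maximum principle gives
  ||v^{k+1}|| <= |H| <= max_{m<=k} ||v^m||.
\<close>

definition l1_history :: "real \<Rightarrow> (nat \<Rightarrow> real) \<Rightarrow> nat \<Rightarrow> real" where
  "l1_history \<alpha> g n = g (Suc n) - (\<Sum>s=0..n. omega_w \<alpha> s * (g (n - s + 1) - g (n - s)))"

lemma omega_w_0 [simp]: "omega_w \<alpha> 0 = 1"
  by (simp add: omega_w_def)

lemma omega_w_nonneg: "\<alpha> < 1 \<Longrightarrow> 0 \<le> omega_w \<alpha> s"
  unfolding omega_w_def by (simp add: powr_mono2)

lemma omega_w_Suc_le:
  assumes "0 < \<alpha>" "\<alpha> < 1"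
  shows "omega_w \<alpha> (Suc s) \<le> omega_w \<alpha> s"
proof (cases s)
  case 0
  have "(2::real) powr (1 - \<alpha>) \<le> 2 powr 1"
    by (rule powr_mono) (use assms in auto)
  then show ?thesis using 0 by (simp add: omega_w_def)
next
  case (Suc m)
  define g where "g = (\<lambda>x::real. (x + 1) powr (1 - \<alpha>) - x powr (1 - \<alpha>))"
  define g' where "g' = (\<lambda>x::real. (1 - \<alpha>) * ((x + 1) powr (1 - \<alpha> - 1) - x powr (1 - \<alpha> - 1)))"
  have "g (real s + 1) \<le> g (real s)"
  proof (rule deriv_nonpos_imp_antimono[where a = "real s" and b = "real s + 1" and g' = g'])
    fix x assume "x \<in> {real s..real s + 1}"
    then have x: "x > 0" using Suc by auto
    have "((\<lambda>x. (x + 1) powr (1 - \<alpha>)) has_real_derivative (1 - \<alpha>) * (x + 1) powr (1 - \<alpha> - of_nat 1) * 1) (at x)"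
      by (rule DERIV_fun_powr) (use x in \<open>auto intro!: derivative_eq_intros\<close>)
    moreover have "((\<lambda>x. x powr (1 - \<alpha>)) has_real_derivative (1 - \<alpha>) * x powr (1 - \<alpha> - 1)) (at x)"
      by (rule has_real_derivative_powr) (use x in auto)
    ultimately show "(g has_real_derivative g' x) (at x)"
      unfolding g_def g'_def by (simp add: DERIV_diff right_diff_distrib)
    have "(x + 1) powr (1 - \<alpha> - 1) \<le> x powr (1 - \<alpha> - 1)"
      using x assms by (intro powr_mono2') auto
    then show "g' x \<le> 0"
      using assms unfolding g'_def by (simp add: mult_nonneg_nonpos)
  qed auto
  then show ?thesis by (simp add: g_def omega_w_def add.commute add.left_commute)
qed

lemma sum_weighted_increments_by_parts:
  fixes w g :: "nat \<Rightarrow> real"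
  shows "w 0 * g (Suc n) - (\<Sum>s=0..n. w s * (g (n - s + 1) - g (n - s)))
     = (\<Sum>m=0..n. (w (n - m) - (if m = 0 then 0 else w (n - m + 1))) * g m)"
proof (induction n arbitrary: w)
  case 0
  then show ?case by (simp add: algebra_simps)
next
  case (Suc n)
  define w' where "w' = (\<lambda>s. w (Suc s))"
  have L: "(\<Sum>s=0..Suc n. w s * (g (Suc n - s + 1) - g (Suc n - s)))
     = w 0 * (g (Suc (Suc n)) - g (Suc n)) + (\<Sum>s=0..n. w' s * (g (n - s + 1) - g (n - s)))"
    by (subst sum.atLeast0_atMost_Suc_shift) (simp add: w'_def)
  have R: "(\<Sum>m=0..Suc n. (w (Suc n - m) - (if m = 0 then 0 else w (Suc n - m + 1))) * g m)
     = (\<Sum>m=0..n. (w' (n - m) - (if m = 0 then 0 else w' (n - m + 1))) * g m) + (w 0 - w 1) * g (Suc n)"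
    by (subst sum.atLeast0_atMost_Suc) (auto simp: w'_def Suc_diff_le intro!: sum.cong)
  show ?case using Suc.IH[of w'] unfolding L R by (simp add: w'_def algebra_simps)
qed

lemma abs_l1_history_le:
  assumes "0 < \<alpha>" "\<alpha> < 1" and bound: "\<And>m. m \<le> n \<Longrightarrow> \<bar>g m\<bar> \<le> P"
  shows "\<bar>l1_history \<alpha> g n\<bar> \<le> P"
proof -
  define e where "e = (\<lambda>m. omega_w \<alpha> (n - m) - (if m = 0 then 0 else omega_w \<alpha> (n - m + 1)))"
  have history: "l1_history \<alpha> g n = (\<Sum>m=0..n. e m * g m)"
    using sum_weighted_increments_by_parts[of "omega_w \<alpha>" g n]
    by (simp add: l1_history_def e_def)
  have e_sum: "(\<Sum>m=0..n. e m) = 1"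
    using sum_weighted_increments_by_parts[of "omega_w \<alpha>" "\<lambda>_. 1" n] by (simp add: e_def)
  have e_nonneg: "e m \<ge> 0" if "m \<le> n" for m
    using that omega_w_nonneg[OF assms(2)] omega_w_Suc_le[OF assms(1,2), of "n - m"]
    by (auto simp: e_def)
  have "\<bar>\<Sum>m=0..n. e m * g m\<bar> \<le> (\<Sum>m=0..n. \<bar>e m * g m\<bar>)"
    by (rule sum_abs)
  also have "\<dots> \<le> (\<Sum>m=0..n. e m * P)"
    using e_nonneg bound by (intro sum_mono) (simp add: abs_mult mult_left_mono)
  also have "\<dots> = P"
    using e_sum by (simp add: sum_distrib_right[symmetric])
  finally show ?thesis unfolding history .
qed

lemma stencil_max_principle:
  fixes \<sigma> p q r t u H E W N S M P :: real
  assumes eq: "\<sigma> * (u - H) + q * (E - W) + r * (N - S) = p * (E - 2*u + W) + t * (N - 2*u + S)"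
    and \<sigma>: "\<sigma> > 0" and "\<bar>q\<bar> \<le> p" "\<bar>r\<bar> \<le> t"
    and "\<bar>E\<bar> \<le> M" "\<bar>W\<bar> \<le> M" "\<bar>N\<bar> \<le> M" "\<bar>S\<bar> \<le> M"
    and u: "\<bar>u\<bar> = M" and "\<bar>H\<bar> \<le> P"
  shows "M \<le> P"
proof -
  have nonneg: "0 \<le> p - q" "0 \<le> p + q" "0 \<le> t - r" "0 \<le> t + r"
    using assms by auto
  have u_eq: "u * (\<sigma> + 2*p + 2*t) = \<sigma> * H + (p - q) * E + (p + q) * W + (t - r) * N + (t + r) * S"
    using eq by (simp add: algebra_simps)
  have "\<bar>u\<bar> * (\<sigma> + 2*p + 2*t) = \<bar>\<sigma> * H + (p - q) * E + (p + q) * W + (t - r) * N + (t + r) * S\<bar>"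
    using \<sigma> nonneg by (simp add: u_eq[symmetric] abs_mult)
  also have "\<dots> \<le> \<bar>\<sigma> * H\<bar> + \<bar>(p - q) * E\<bar> + \<bar>(p + q) * W\<bar> + \<bar>(t - r) * N\<bar> + \<bar>(t + r) * S\<bar>"
    by linarith
  also have "\<dots> = \<sigma> * \<bar>H\<bar> + (p - q) * \<bar>E\<bar> + (p + q) * \<bar>W\<bar> + (t - r) * \<bar>N\<bar> + (t + r) * \<bar>S\<bar>"
    using nonneg \<sigma> by (simp add: abs_mult)
  also have "\<dots> \<le> \<sigma> * P + (p - q) * M + (p + q) * M + (t - r) * M + (t + r) * M"
    using assms nonneg by (intro add_mono mult_left_mono) auto
  finally have "\<sigma> * M \<le> \<sigma> * P"
    using u by (simp add: algebra_simps)
  then show ?thesis using \<sigma> by simp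
qed

lemma abs_convection_le_diffusion:
  fixes a c h A D :: real
  assumes "0 \<le> a" "a \<le> A" "D \<le> c" "0 < h" "A * h \<le> 2 * D"
  shows "\<bar>a / (2 * h)\<bar> \<le> c / h\<^sup>2"
proof -
  have "a * h \<le> 2 * c"
    using assms by (smt (verit) mult_right_mono)
  then have "a * h / (2 * h\<^sup>2) \<le> 2 * c / (2 * h\<^sup>2)"
    using assms by (intro divide_right_mono) auto
  then show ?thesis
    using assms by (simp add: power2_eq_square)
qed

lemma grid_node_mem:
  fixes L R :: real
  assumes "L < R" "0 < N" "i \<le> N"
  shows "L \<le> L + real i * ((R - L) / real N) \<and> L + real i * ((R - L) / real N) \<le> R"
proof -
  have "real i * ((R - L) / real N) \<le> real N * ((R - L) / real N)"
    using assms by (intro mult_right_mono) auto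
  then show ?thesis
    using assms by simp
qed

lemma abs_le_grid_norm:
  "i \<in> {1..Nx - 1} \<Longrightarrow> j \<in> {1..Ny - 1} \<Longrightarrow> \<bar>v i j k\<bar> \<le> grid_norm Nx Ny v k"
  unfolding grid_norm_def by (intro Max_ge) auto

lemma grid_norm_nonneg: "0 \<le> grid_norm Nx Ny v k"
  unfolding grid_norm_def by (intro Max_ge) auto

lemma grid_norm_attained:
  "grid_norm Nx Ny v k = 0 \<or> (\<exists>i\<in>{1..Nx - 1}. \<exists>j\<in>{1..Ny - 1}. \<bar>v i j k\<bar> = grid_norm Nx Ny v k)"
proof -
  have "grid_norm Nx Ny v k \<in> insert 0 ((\<lambda>(i, j). \<bar>v i j k\<bar>) ` ({1..Nx - 1} \<times> {1..Ny - 1}))"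
    unfolding grid_norm_def by (rule Max_in) auto
  then show ?thesis by fastforce
qed

locale implicit_l1_scheme =
  fixes \<alpha> \<sigma> :: real and Nx Ny Nt :: nat and p q r t v :: "nat \<Rightarrow> nat \<Rightarrow> nat \<Rightarrow> real"
  assumes alpha: "0 < \<alpha>" "\<alpha> < 1"
    and sigma_pos: "0 < \<sigma>"
    and boundary_zero: "\<And>i j k. i \<le> Nx \<Longrightarrow> j \<le> Ny \<Longrightarrow> 1 \<le> k \<Longrightarrow> k \<le> Nt \<Longrightarrow>
        i = 0 \<or> i = Nx \<or> j = 0 \<or> j = Ny \<Longrightarrow> v i j k = 0"
    and convection_dominated: "\<And>i j k. i \<in> {1..Nx - 1} \<Longrightarrow> j \<in> {1..Ny - 1} \<Longrightarrow> k < Nt \<Longrightarrow>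
        \<bar>q i j k\<bar> \<le> p i j k \<and> \<bar>r i j k\<bar> \<le> t i j k"
    and scheme_eq: "\<And>i j k. i \<in> {1..Nx - 1} \<Longrightarrow> j \<in> {1..Ny - 1} \<Longrightarrow> k < Nt \<Longrightarrow>
        \<sigma> * (v i j (Suc k) - l1_history \<alpha> (v i j) k)
          + q i j k * (v (i + 1) j (Suc k) - v (i - 1) j (Suc k))
          + r i j k * (v i (j + 1) (Suc k) - v i (j - 1) (Suc k))
        = p i j k * (v (i + 1) j (Suc k) - 2 * v i j (Suc k) + v (i - 1) j (Suc k))
          + t i j k * (v i (j + 1) (Suc k) - 2 * v i j (Suc k) + v i (j - 1) (Suc k))"
begin

lemma abs_le_grid_norm_closure:
  assumes "i \<le> Nx" "j \<le> Ny" "1 \<le> k" "k \<le> Nt"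
  shows "\<bar>v i j k\<bar> \<le> grid_norm Nx Ny v k"
proof (cases "i = 0 \<or> i = Nx \<or> j = 0 \<or> j = Ny")
  case True
  then show ?thesis using assms boundary_zero grid_norm_nonneg by simp
next
  case False
  then show ?thesis using assms by (intro abs_le_grid_norm) auto
qed

lemma grid_norm_Suc_le:
  assumes k: "k < Nt" and past: "\<And>m. m \<le> k \<Longrightarrow> grid_norm Nx Ny v m \<le> P" and "0 \<le> P"
  shows "grid_norm Nx Ny v (Suc k) \<le> P"
  using grid_norm_attained[of Nx Ny v "Suc k"]
proof (elim disjE bexE)
  fix i j assume i: "i \<in> {1..Nx - 1}" and j: "j \<in> {1..Ny - 1}"
    and max: "\<bar>v i j (Suc k)\<bar> = grid_norm Nx Ny v (Suc k)"
  have neighbour: "\<bar>v i' j' (Suc k)\<bar> \<le> grid_norm Nx Ny v (Suc k)"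
    if "i' \<in> {i - 1, i, i + 1}" "j' \<in> {j - 1, j, j + 1}" for i' j'
    using that i j k by (intro abs_le_grid_norm_closure) auto
  have history: "\<bar>l1_history \<alpha> (v i j) k\<bar> \<le> P"
    using abs_le_grid_norm[OF i j] past by (intro abs_l1_history_le[OF alpha]) (meson order_trans)
  show ?thesis
  proof (rule stencil_max_principle[OF scheme_eq[OF i j k] sigma_pos])
    show "\<bar>q i j k\<bar> \<le> p i j k" "\<bar>r i j k\<bar> \<le> t i j k"
      using convection_dominated[OF i j k] by auto
  qed (use neighbour max history in auto)
qed (use \<open>0 \<le> P\<close> in simp)

lemma grid_norm_le_initial: "k \<le> Nt \<Longrightarrow> grid_norm Nx Ny v k \<le> grid_norm Nx Ny v 0"
proof (induction k rule: less_induct)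
  case (less k)
  show ?case
  proof (cases k)
    case (Suc m)
    then show ?thesis
      using less unfolding Suc by (intro grid_norm_Suc_le) (auto simp: grid_norm_nonneg)
  qed simp
qed

end

theorem mainTheorem1:
  fixes \<alpha> T xL xR yL yR A D :: real
    and Nx Ny Nt :: nat
    and a b c d f :: "real \<Rightarrow> real \<Rightarrow> real \<Rightarrow> real"
    and \<psi> :: "real \<Rightarrow> real \<Rightarrow> real"
    and v :: "nat \<Rightarrow> nat \<Rightarrow> nat \<Rightarrow> real"
  assumes "0 < \<alpha>" "\<alpha> < 1" "0 < T" "xL < xR" "yL < yR"
    and "0 < Nx" "0 < Ny" "0 < Nt"
    and "0 < A" "0 < D"
    and bounds: "\<And>x y t. xL \<le> x \<Longrightarrow> x \<le> xR \<Longrightarrow> yL \<le> y \<Longrightarrow> y \<le> yR \<Longrightarrow> 0 \<le> t \<Longrightarrow> t \<le> T \<Longrightarrow>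
        0 \<le> a x y t \<and> a x y t \<le> A \<and> 0 \<le> b x y t \<and> b x y t \<le> A \<and> D \<le> c x y t \<and> D \<le> d x y t"
    and mesh: "max ((xR - xL) / real Nx) ((yR - yL) / real Ny) \<le> 2 * D / A"
    and f0: "\<And>x y t. f x y t = 0"
    and scheme: "IFDS \<alpha> T xL xR yL yR Nx Ny Nt a b c d f \<psi> v"
  shows "\<forall>k. 1 \<le> k \<and> k \<le> Nt \<longrightarrow> grid_norm Nx Ny v k \<le> grid_norm Nx Ny v 0"
proof -
  define dx dy dt where "dx = (xR - xL) / real Nx" and "dy = (yR - yL) / real Ny" and "dt = T / real Nt"
  define node where "node F i j k = F (xL + real i * dx) (yL + real j * dy) (real (k + 1) * dt)"
    for F :: "real \<Rightarrow> real \<Rightarrow> real \<Rightarrow> real" and i j k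
  have boundary: "\<forall>i\<le>Nx. \<forall>j\<le>Ny. \<forall>k. 1 \<le> k \<and> k \<le> Nt \<and> (i = 0 \<or> i = Nx \<or> j = 0 \<or> j = Ny) \<longrightarrow> v i j k = 0"
    and equation: "\<forall>i j k. 1 \<le> i \<and> i \<le> Nx - 1 \<and> 1 \<le> j \<and> j \<le> Ny - 1 \<and> k \<le> Nt - 1 \<longrightarrow>
        sigma_coef \<alpha> dt * (\<Sum>s=0..k. omega_w \<alpha> s * (v i j (k - s + 1) - v i j (k - s)))
        + node a i j k * (v (i+1) j (k+1) - v (i-1) j (k+1)) / (2 * dx)
        + node b i j k * (v i (j+1) (k+1) - v i (j-1) (k+1)) / (2 * dy)
        = node c i j k * (v (i+1) j (k+1) - 2 * v i j (k+1) + v (i-1) j (k+1)) / dx\<^sup>2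
        + node d i j k * (v i (j+1) (k+1) - 2 * v i j (k+1) + v i (j-1) (k+1)) / dy\<^sup>2"
    using scheme unfolding IFDS_def Let_def dx_def[symmetric] dy_def[symmetric] dt_def[symmetric] node_def
    by (simp_all add: f0)
  have coefficients: "0 \<le> node a i j k \<and> node a i j k \<le> A \<and> 0 \<le> node b i j k \<and> node b i j k \<le> A
      \<and> D \<le> node c i j k \<and> D \<le> node d i j k" if "i \<le> Nx" "j \<le> Ny" "k < Nt" for i j k
    using that \<open>0 < Nx\<close> \<open>0 < Ny\<close> \<open>0 < Nt\<close> \<open>xL < xR\<close> \<open>yL < yR\<close> \<open>0 < T\<close>
      grid_node_mem[of xL xR Nx i] grid_node_mem[of yL yR Ny j] grid_node_mem[of 0 T Nt "k + 1"]
    unfolding node_def dx_def dy_def dt_def by (intro bounds) auto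
  have mesh_x: "0 < dx" "A * dx \<le> 2 * D" and mesh_y: "0 < dy" "A * dy \<le> 2 * D"
    using mesh \<open>0 < A\<close> \<open>0 < Nx\<close> \<open>0 < Ny\<close> \<open>xL < xR\<close> \<open>yL < yR\<close>
    by (simp_all add: dx_def dy_def pos_le_divide_eq mult.commute)
  interpret implicit_l1_scheme \<alpha> "sigma_coef \<alpha> dt" Nx Ny Nt
      "\<lambda>i j k. node c i j k / dx\<^sup>2" "\<lambda>i j k. node a i j k / (2 * dx)"
      "\<lambda>i j k. node b i j k / (2 * dy)" "\<lambda>i j k. node d i j k / dy\<^sup>2" v
  proof
    show "0 < \<alpha>" "\<alpha> < 1" by fact+
    show "v i j k = 0" if "i \<le> Nx" "j \<le> Ny" "1 \<le> k" "k \<le> Nt" "i = 0 \<or> i = Nx \<or> j = 0 \<or> j = Ny" for i j k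
      using boundary that by blast
    show "0 < sigma_coef \<alpha> dt"
      using \<open>0 < T\<close> \<open>0 < Nt\<close> \<open>\<alpha> < 1\<close> by (simp add: dt_def sigma_coef_def Gamma_real_pos)
    fix i j k assume i: "i \<in> {1..Nx - 1}" and j: "j \<in> {1..Ny - 1}" and k: "k < Nt"
    show "\<bar>node a i j k / (2 * dx)\<bar> \<le> node c i j k / dx\<^sup>2 \<and> \<bar>node b i j k / (2 * dy)\<bar> \<le> node d i j k / dy\<^sup>2"
    proof -
      have "i \<le> Nx" "j \<le> Ny" using i j by auto
      then show ?thesis
        using coefficients[of i j k] k mesh_x mesh_y by (intro conjI abs_convection_le_diffusion) auto
    qed
    show "sigma_coef \<alpha> dt * (v i j (Suc k) - l1_history \<alpha> (v i j) k)
          + node a i j k / (2 * dx) * (v (i + 1) j (Suc k) - v (i - 1) j (Suc k))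
          + node b i j k / (2 * dy) * (v i (j + 1) (Suc k) - v i (j - 1) (Suc k))
        = node c i j k / dx\<^sup>2 * (v (i + 1) j (Suc k) - 2 * v i j (Suc k) + v (i - 1) j (Suc k))
          + node d i j k / dy\<^sup>2 * (v i (j + 1) (Suc k) - 2 * v i j (Suc k) + v i (j - 1) (Suc k))"
      using equation[rule_format, of i j k] i j k by (simp add: l1_history_def)
  qed
  show ?thesis using grid_norm_le_initial by blast
qed

end
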